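(* Let $0<A<B$ and $h(t)=t\left(\frac{3-t}{2}\right)^2$. For $x>B/3$ define $$\rho(x)=\frac{\min\{h(t):t\in[A/x,B/x]\}}{\max\{h(t):t\in[A/x,B/x]\}} .$$ Then $\rho$ attains its maximum over $x\in(B/3,\infty)$ at $x=\frac13\left(A+\sqrt{AB}+B\right)$.
   Context: Interpretation: if a Gabor frame operator $S$ has spectrum $[A,B]$ and is rescaled to $S/x$, one step of the iteration $\gamma\mapsto\frac32\gamma-\frac12S_\gamma\gamma$ (with $S_\gamma$ the frame operator of $(\gamma,a,b)$) maps the spectrum via $h$, and $\rho(x)$ is the resulting ratio of smallest to largest frame bound. *)

theory Defs
  imports "HOL-Analysis.Analysis"
begin

definition hfun :: "real \<Rightarrow> real" where
  "hfun t = t * ((3 - t) / 2)^2"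

text \<open>Ratio of minimum to maximum of h over [A/x, B/x]; h is continuous so
  Inf/Sup over the compact interval are the min/max.\<close>
definition rho :: "real \<Rightarrow> real \<Rightarrow> real \<Rightarrow> real" where
  "rho A B x = (INF t\<in>{A/x..B/x}. hfun t) / (SUP t\<in>{A/x..B/x}. hfun t)"

end

(* h rises from h(0) = 0 to its maximum h(1) = 1 and falls back to h(3) = 0, and
   h(t) - h(s) = (t - s) Q(t, s) / 4 with a symmetric quadratic Q.  Since
   Q(A/x, B/x) vanishes exactly when 3x = A + B +- sqrt(AB), the endpoints of
   [A/x0, B/x0] lie on both sides of 1 and have equal h-values, so
   rho(x0) = h(A/x0).  For any other admissible x, if 1 lies in [A/x, B/x] then
   rho(x) is at most the h-value of the endpoint that has moved further from 1
   than the corresponding endpoint at x0; otherwise the submultiplicativity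
   h(r t) <= h(r) h(t) for (1 - r)(1 - t) >= 0 bounds rho(x) by h(B/A) or
   h(A/B), i.e. by its value at x = A or x = B. *)
theory Submission
  imports Defs
begin

lemma hfun_1 [simp]: "hfun 1 = 1"
  by (simp add: hfun_def)

lemma hfun_diff_factor:
  "hfun t - hfun s = (t - s) * (t\<^sup>2 + t * s + s\<^sup>2 - 6 * t - 6 * s + 9) / 4"
  unfolding hfun_def by (simp add: field_simps power2_eq_square)

lemma hfun_nonneg: "0 \<le> t \<Longrightarrow> 0 \<le> hfun t"
  unfolding hfun_def by simp

lemma hfun_pos: "0 < t \<Longrightarrow> t < 3 \<Longrightarrow> 0 < hfun t"
  unfolding hfun_def by simp

lemma hfun_le_1:
  assumes "0 \<le> t" "t \<le> 4"
  shows "hfun t \<le> 1"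
proof -
  have "1 - hfun t = (t - 1)\<^sup>2 * (4 - t) / 4"
    unfolding hfun_def by (simp add: field_simps power2_eq_square)
  moreover have "(t - 1)\<^sup>2 * (4 - t) / 4 \<ge> 0"
    using assms by simp
  ultimately show ?thesis by linarith
qed

lemma hfun_mono_0_1:
  assumes "0 \<le> s" "s \<le> t" "t \<le> 1"
  shows "hfun s \<le> hfun t"
proof -
  have "t\<^sup>2 + t * s + s\<^sup>2 - 6 * t - 6 * s + 9
      = 3 * (1 - t) + 3 * (1 - s) + (1 - t)\<^sup>2 + (1 - t) * (1 - s) + (1 - s)\<^sup>2"
    by (simp add: power2_eq_square algebra_simps)
  also have "\<dots> \<ge> 0"
    using assms by (intro add_nonneg_nonneg) auto
  finally show ?thesis
    using hfun_diff_factor[of t s] assms by (smt (verit) divide_nonneg_pos mult_nonneg_nonneg)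
qed

lemma hfun_antimono_1_3:
  assumes "1 \<le> s" "s \<le> t" "t \<le> 3"
  shows "hfun t \<le> hfun s"
proof -
  have "\<bar>(t - 2) * (s - 2)\<bar> \<le> 1"
    unfolding abs_mult using assms by (intro mult_le_one) auto
  moreover have "(t - 1) * (t - 3) \<le> 0" "(s - 1) * (s - 3) \<le> 0"
    using assms by (auto simp: mult_nonneg_nonpos)
  moreover have "t\<^sup>2 + t * s + s\<^sup>2 - 6 * t - 6 * s + 9
      = (t - 1) * (t - 3) + (s - 1) * (s - 3) + ((t - 2) * (s - 2) - 1)"
    by (simp add: power2_eq_square algebra_simps)
  ultimately have "t\<^sup>2 + t * s + s\<^sup>2 - 6 * t - 6 * s + 9 \<le> 0"
    by linarith
  then show ?thesis
    using hfun_diff_factor[of t s] assms by (smt (verit) divide_nonpos_pos mult_nonneg_nonpos)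
qed

lemma hfun_mult_le:
  assumes "0 \<le> r" "0 \<le> t" "r * t \<le> 3" "0 \<le> (1 - r) * (1 - t)"
  shows "hfun (r * t) \<le> hfun r * hfun t"
proof -
  have "(3 - r) * (3 - t) / 2 - (3 - r * t) = 3 * ((1 - r) * (1 - t)) / 2"
    by (simp add: field_simps)
  then have "(3 - r * t)\<^sup>2 \<le> ((3 - r) * (3 - t) / 2)\<^sup>2"
    using assms by (intro power_mono) linarith+
  then have "r * t / 4 * (3 - r * t)\<^sup>2 \<le> r * t / 4 * ((3 - r) * (3 - t) / 2)\<^sup>2"
    using assms by (intro mult_left_mono) auto
  then show ?thesis
    unfolding hfun_def by (simp add: power2_eq_square field_simps)
qed

lemma hfun_INF_eq_min:
  assumes "0 \<le> a" "a \<le> b" "b \<le> 3"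
  shows "(INF t\<in>{a..b}. hfun t) = min (hfun a) (hfun b)"
proof (rule antisym)
  have "bdd_below (hfun ` {a..b})"
    using assms by (intro bdd_belowI2[where m=0]) (auto intro: hfun_nonneg)
  then show "(INF t\<in>{a..b}. hfun t) \<le> min (hfun a) (hfun b)"
    using assms by (auto intro: cINF_lower)
  show "min (hfun a) (hfun b) \<le> (INF t\<in>{a..b}. hfun t)"
  proof (rule cINF_greatest)
    fix t assume t: "t \<in> {a..b}"
    show "min (hfun a) (hfun b) \<le> hfun t"
    proof (cases "t \<le> 1")
      case True
      then show ?thesis using t assms hfun_mono_0_1[of a t] by auto
    next
      case False
      then show ?thesis using t assms hfun_antimono_1_3[of t b] by auto
    qed
  qed (use assms in auto)
qed

lemma hfun_SUP_eq_1:
  assumes "0 \<le> a" "a \<le> 1" "1 \<le> b" "b \<le> 4"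
  shows "(SUP t\<in>{a..b}. hfun t) = 1"
proof (rule antisym)
  show "(SUP t\<in>{a..b}. hfun t) \<le> 1"
    using assms by (intro cSUP_least) (auto intro: hfun_le_1)
  have "bdd_above (hfun ` {a..b})"
    using assms by (intro bdd_aboveI2[where M=1]) (auto intro: hfun_le_1)
  then have "hfun 1 \<le> (SUP t\<in>{a..b}. hfun t)"
    using assms by (intro cSUP_upper) auto
  then show "1 \<le> (SUP t\<in>{a..b}. hfun t)"
    by simp
qed

lemma rho_le_hfun_div:
  assumes "0 < A" "A \<le> B" "B / 3 < x" "t \<in> {A/x..B/x}" "s \<in> {A/x..B/x}"
  shows "rho A B x \<le> hfun t / hfun s"
proof -
  let ?I = "{A/x..B/x}"
  have "0 < x" using assms by linarith
  then have "0 < A/x" "B/x < 3"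
    using assms by (auto simp: field_simps)
  then have hfun_bounds: "0 < hfun u" "hfun u \<le> 1" if "u \<in> ?I" for u
    using that by (auto intro: hfun_pos hfun_le_1)
  have "bdd_below (hfun ` ?I)"
    using hfun_bounds(1) by (intro bdd_belowI2[where m=0] less_imp_le)
  then have "(INF u\<in>?I. hfun u) \<le> hfun t"
    using assms(4) by (rule cINF_lower)
  moreover have "0 \<le> (INF u\<in>?I. hfun u)"
    using assms(4) hfun_bounds(1) by (intro cINF_greatest less_imp_le) auto
  moreover have "bdd_above (hfun ` ?I)"
    using hfun_bounds(2) by (intro bdd_aboveI2[where M=1])
  then have "hfun s \<le> (SUP u\<in>?I. hfun u)"
    using assms(5) by (rule cSUP_upper[rotated])
  moreover have "0 < hfun s"
    using assms(5) by (rule hfun_bounds)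
  ultimately have "rho A B x \<le> (INF u\<in>?I. hfun u) / hfun s"
    unfolding rho_def by (intro divide_left_mono) auto
  also have "\<dots> \<le> hfun t / hfun s"
    using \<open>_ \<le> hfun t\<close> \<open>0 < hfun s\<close> by (intro divide_right_mono) auto
  finally show ?thesis .
qed

lemma rho_le_hfun_ratio_if_interval_above_1:
  assumes "0 < A" "A \<le> B" "B / 3 < x" "x \<le> A"
  shows "rho A B x \<le> hfun (B / A)"
proof -
  have x: "0 < x" using assms by linarith
  have "1 \<le> A/x" "B/x < 3" "A/x \<le> B/x"
    using assms x by (auto simp: field_simps)
  have "1 \<le> B/A" using assms by simp
  have B_over_x: "B/x = B/A * (A/x)" using assms by simp
  have "hfun (B/x) \<le> hfun (B/A) * hfun (A/x)"
    unfolding B_over_x using \<open>1 \<le> A/x\<close> \<open>1 \<le> B/A\<close> \<open>B/x < 3\<close>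
    by (intro hfun_mult_le mult_nonpos_nonpos) (auto simp flip: B_over_x)
  moreover have "0 < hfun (A/x)"
    using \<open>1 \<le> A/x\<close> \<open>A/x \<le> B/x\<close> \<open>B/x < 3\<close> by (intro hfun_pos) auto
  ultimately have "hfun (B/x) / hfun (A/x) \<le> hfun (B / A)"
    by (simp add: divide_le_eq)
  moreover have "rho A B x \<le> hfun (B/x) / hfun (A/x)"
    using assms \<open>A/x \<le> B/x\<close> by (intro rho_le_hfun_div) auto
  ultimately show ?thesis by linarith
qed

lemma rho_le_hfun_ratio_if_interval_below_1:
  assumes "0 < A" "A \<le> B" "B \<le> x"
  shows "rho A B x \<le> hfun (A / B)"
proof -
  have x: "0 < x" using assms by linarith
  have "0 < A/x" "B/x \<le> 1" "A/x \<le> B/x" "A/x \<le> 3"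
    using assms x by (auto simp: field_simps)
  have "A/B \<le> 1" using assms by simp
  have A_over_x: "A/x = A/B * (B/x)" using assms by simp
  have "hfun (A/x) \<le> hfun (A/B) * hfun (B/x)"
    unfolding A_over_x using \<open>0 < A/x\<close> \<open>B/x \<le> 1\<close> \<open>A/B \<le> 1\<close> \<open>A/x \<le> 3\<close> assms
    by (intro hfun_mult_le mult_nonneg_nonneg) (auto simp flip: A_over_x)
  moreover have "0 < hfun (B/x)"
    using \<open>0 < A/x\<close> \<open>A/x \<le> B/x\<close> \<open>B/x \<le> 1\<close> by (intro hfun_pos) auto
  ultimately have "hfun (A/x) / hfun (B/x) \<le> hfun (A / B)"
    by (simp add: divide_le_eq)
  moreover have "rho A B x \<le> hfun (A/x) / hfun (B/x)"
    using assms \<open>A/x \<le> B/x\<close> by (intro rho_le_hfun_div) auto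
  ultimately show ?thesis by linarith
qed

lemma rho_le_hfun_if_interval_contains_1:
  assumes "0 < A" "A \<le> x" "x \<le> B" "B / 3 < x" "t \<in> {A/x..B/x}"
  shows "rho A B x \<le> hfun t"
  using rho_le_hfun_div[of A B x t 1] assms by auto

lemma rho_le_hfun_at_balanced_scale:
  assumes "0 < A" "A < B" "A \<le> x0" "x0 \<le> B" "hfun (A / x0) = hfun (B / x0)" "B / 3 < x"
  shows "rho A B x \<le> hfun (A / x0)"
proof -
  have "0 < x0" "0 < x" using assms by linarith+
  have "1 \<le> B/x0" "B/x < 3" "A/x0 \<le> 1"
    using assms \<open>0 < x0\<close> \<open>0 < x\<close> by (auto simp: field_simps)
  consider "x \<le> A" | "B \<le> x" | "A \<le> x" "x \<le> B" "x0 \<le> x" | "A \<le> x" "x \<le> B" "x \<le> x0"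
    by linarith
  then show ?thesis
  proof cases
    case 1
    then have "rho A B x \<le> hfun (B/A)"
      using assms by (intro rho_le_hfun_ratio_if_interval_above_1) auto
    also have "\<dots> \<le> hfun (B/x0)"
    proof (rule hfun_antimono_1_3)
      have "B/A \<le> B/x"
        using assms 1 \<open>0 < x\<close> by (intro frac_le) auto
      then show "B/A \<le> 3"
        using \<open>B/x < 3\<close> by simp
      show "B/x0 \<le> B/A"
        using assms by (intro frac_le) auto
    qed fact
    finally show ?thesis using assms by simp
  next
    case 2
    then have "rho A B x \<le> hfun (A/B)"
      using assms by (intro rho_le_hfun_ratio_if_interval_below_1) auto
    also have "\<dots> \<le> hfun (A/x0)"
      using assms \<open>A/x0 \<le> 1\<close> \<open>0 < x0\<close> by (intro hfun_mono_0_1) (auto simp: frac_le)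
    finally show ?thesis .
  next
    case 3
    then have "rho A B x \<le> hfun (A/x)"
      using assms \<open>0 < x\<close> by (intro rho_le_hfun_if_interval_contains_1) (auto simp: frac_le)
    also have "\<dots> \<le> hfun (A/x0)"
      using assms 3 \<open>A/x0 \<le> 1\<close> \<open>0 < x0\<close> by (intro hfun_mono_0_1) (auto simp: frac_le)
    finally show ?thesis .
  next
    case 4
    then have "rho A B x \<le> hfun (B/x)"
      using assms \<open>0 < x\<close> by (intro rho_le_hfun_if_interval_contains_1) (auto simp: frac_le)
    also have "\<dots> \<le> hfun (B/x0)"
      using assms 4 \<open>1 \<le> B/x0\<close> \<open>B/x < 3\<close> \<open>0 < x\<close>
      by (intro hfun_antimono_1_3) (auto simp: frac_le)
    finally show ?thesis using assms by simp
  qed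
qed

lemma geometric_mean_strictly_between:
  fixes A B :: real
  assumes "0 < A" "A < B"
  shows "A < sqrt (A * B)" "sqrt (A * B) < B"
proof -
  have "sqrt (A * A) < sqrt (A * B)" "sqrt (A * B) < sqrt (B * B)"
    using assms by (intro real_sqrt_less_mono; simp)+
  then show "A < sqrt (A * B)" "sqrt (A * B) < B"
    using assms by simp_all
qed

lemma hfun_eq_at_ends_if_balanced:
  assumes "0 \<le> A" "0 \<le> B" "x \<noteq> 0" "3 * x = A + sqrt (A * B) + B"
  shows "hfun (A / x) = hfun (B / x)"
proof -
  have "(3 * x - (A + B))\<^sup>2 = A * B"
    using assms by simp
  then have "A\<^sup>2 + A * B + B\<^sup>2 - 6 * (A + B) * x + 9 * x\<^sup>2 = 0"
    by (simp add: power2_eq_square algebra_simps)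
  moreover have "(A/x)\<^sup>2 + A/x * (B/x) + (B/x)\<^sup>2 - 6 * (A/x) - 6 * (B/x) + 9
      = (A\<^sup>2 + A * B + B\<^sup>2 - 6 * (A + B) * x + 9 * x\<^sup>2) / x\<^sup>2"
    using assms(3) by (simp add: field_simps power2_eq_square)
  ultimately show ?thesis
    using hfun_diff_factor[of "A/x" "B/x"] by simp
qed

theorem mainTheorem10:
  fixes A B :: real
  assumes "0 < A" and "A < B"
  defines "x0 \<equiv> (A + sqrt (A * B) + B) / 3"
  shows "x0 > B / 3 \<and> (\<forall>x. x > B / 3 \<longrightarrow> rho A B x \<le> rho A B x0)"
proof -
  have "A < x0" "x0 < B" "B / 3 < x0"
    using geometric_mean_strictly_between[OF assms(1,2)] assms(1) by (auto simp: x0_def)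
  moreover have balanced: "hfun (A / x0) = hfun (B / x0)"
    using assms \<open>A < x0\<close> by (intro hfun_eq_at_ends_if_balanced) (auto simp: x0_def)
  moreover have "rho A B x0 = hfun (A / x0)"
  proof -
    have "A / x0 \<le> 1" "1 \<le> B / x0" "B / x0 \<le> 3"
      using assms \<open>A < x0\<close> \<open>x0 < B\<close> \<open>B / 3 < x0\<close> by (auto simp: field_simps)
    then show ?thesis
      unfolding rho_def using assms \<open>A < x0\<close> balanced
      by (simp add: hfun_INF_eq_min hfun_SUP_eq_1 frac_le)
  qed
  ultimately show ?thesis
    using rho_le_hfun_at_balanced_scale[of A B x0] assms by auto
qed

end
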